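(* Let $\widehat{\mathscr{O}}$ be a commutative local principal ideal ring, complete with respect to its maximal ideal $\mathfrak{m}=(\pi)$, whose residue field $k$ has characteristic different from $2$. Let $A\in \mathrm{GL}_n(\widehat{\mathscr{O}})$, and denote by $\overline{A}\in\mathrm{M}_n(k)$ its reduction modulo $\mathfrak m$. Assume that there exists a monic polynomial $F(t)\in \widehat{\mathscr{O}}[t]$ with $F(A)=0$ such that $$\deg\bigl(\overline{F}(t)\bigr)=\deg\bigl(\mathrm{Min}_{k,\overline{A}}(t)\bigr),$$ where $\overline{F}$ is the reduction of $F$ modulo $\mathfrak m$ and $\mathrm{Min}_{k,\overline{A}}$ is the minimal polynomial of $\overline{A}$ over $k$. Then, for every $i\in\mathbb{N}$, the null ideal $$N^{\mathscr{O}_{i+1}}_{A_{i+1}}=\{G(t)\in\mathscr{O}_{i+1}[t]: G(A_{i+1})=0\}$$ is principal and is generated by $F_{i+1}(t)$, where $\mathscr{O}_{i}=\widehat{\mathscr{O}}/\pi^{i}\widehat{\mathscr{O}}$, and $A_{i}$, $F_{i}(t)$ denote the images of $A$ and $F(t)$ under the reduction $\widehat{\mathscr{O}}\to\mathscr{O}_{i}$.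
   Context: A commutative ring $\mathscr R$ is complete with respect to an ideal $I$ if the canonical map $\mathscr R\to\varprojlim_j \mathscr R/I^j$ is an isomorphism. For $\ell\ge1$, $\mathscr{O}_\ell=\widehat{\mathscr{O}}/\pi^\ell\widehat{\mathscr{O}}$; reductions of elements, matrices and polynomials from $\widehat{\mathscr{O}}$ to $\mathscr{O}_\ell$ are applied entrywise/coefficientwise. For a commutative ring $\mathscr R$ and $X\in\mathrm{M}_n(\mathscr R)$, the null ideal is $N^{\mathscr R}_X=\{G\in\mathscr R[t]:G(X)=0\}$. *)

theory Defs
  imports "HOL-Analysis.Analysis" "HOL-Computational_Algebra.Polynomial"
begin

definition is_ideal :: "'a::comm_ring_1 set \<Rightarrow> bool" where
  "is_ideal I \<longleftrightarrow> 0 \<in> I \<and> (\<forall>x\<in>I. \<forall>y\<in>I. x + y \<in> I) \<and> (\<forall>r. \<forall>x\<in>I. r * x \<in> I)"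

definition principal_ideal :: "'a::comm_ring_1 \<Rightarrow> 'a set" where
  "principal_ideal g = {x. g dvd x}"

definition is_principal_ideal_ring :: "'a::comm_ring_1 itself \<Rightarrow> bool" where
  "is_principal_ideal_ring _ \<longleftrightarrow> (\<forall>I::'a set. is_ideal I \<longrightarrow> (\<exists>g. I = principal_ideal g))"

definition is_maximal_ideal :: "'a::comm_ring_1 set \<Rightarrow> bool" where
  "is_maximal_ideal M \<longleftrightarrow> is_ideal M \<and> M \<noteq> UNIV \<and>
     (\<forall>J. is_ideal J \<and> M \<subseteq> J \<longrightarrow> J = M \<or> J = UNIV)"

definition is_local_ring :: "'a::comm_ring_1 itself \<Rightarrow> bool" where
  "is_local_ring _ \<longleftrightarrow> (\<exists>!M::'a set. is_maximal_ideal M)"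

text \<open>Completeness with respect to the ideal (\<pi>): the canonical map
  R \<rightarrow> lim R/(\<pi>^j) is injective (intersection of all (\<pi>^j) is 0) and surjective
  (every compatible family, represented by lifts s j with s (j+1) \<equiv> s j mod \<pi>^j,
  comes from an element x with x \<equiv> s j mod \<pi>^j for all j). Note (\<pi>)^j = (\<pi>^j).\<close>
definition complete_wrt_principal :: "'a::comm_ring_1 \<Rightarrow> bool" where
  "complete_wrt_principal \<pi> \<longleftrightarrow>
     (\<forall>x. (\<forall>j. \<pi> ^ j dvd x) \<longrightarrow> x = 0) \<and>
     (\<forall>s::nat \<Rightarrow> 'a. (\<forall>j. \<pi> ^ j dvd (s (Suc j) - s j)) \<longrightarrow>
        (\<exists>x. \<forall>j. \<pi> ^ j dvd (x - s j)))"

definition mat_pow :: "'a::comm_ring_1 ^'n^'n \<Rightarrow> nat \<Rightarrow> 'a ^'n^'n" where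
  "mat_pow A k = (((**) A) ^^ k) (mat 1)"

definition poly_mat :: "'a::comm_ring_1 poly \<Rightarrow> 'a ^'n^'n \<Rightarrow> 'a ^'n^'n" where
  "poly_mat p A = (\<chi> i j. \<Sum>k\<le>degree p. coeff p k * (mat_pow A k $ i $ j))"

definition mat_zero_mod :: "'a::comm_ring_1 \<Rightarrow> 'a ^'n^'n \<Rightarrow> bool" where
  "mat_zero_mod q M \<longleftrightarrow> (\<forall>i j. q dvd M $ i $ j)"

definition poly_cong_mod :: "'a::comm_ring_1 \<Rightarrow> 'a poly \<Rightarrow> 'a poly \<Rightarrow> bool" where
  "poly_cong_mod q G H \<longleftrightarrow> (\<forall>k. q dvd coeff (G - H) k)"

text \<open>Degree of the reduction of F modulo (\<pi>) (0 if the reduction is 0).\<close>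
definition degree_mod :: "'a::comm_ring_1 \<Rightarrow> 'a poly \<Rightarrow> nat" where
  "degree_mod \<pi> F = (if \<forall>k. \<pi> dvd coeff F k then 0 else GREATEST k. \<not> \<pi> dvd coeff F k)"

text \<open>Degree of the minimal polynomial over k = R/(\<pi>) of the reduction of A:
  the least degree of a monic polynomial over k annihilating the reduction of A.
  Monic polynomials over k of degree d are exactly reductions of monic polynomials
  over R of degree d, and reduction commutes with evaluation.\<close>
definition min_poly_degree_mod :: "'a::comm_ring_1 \<Rightarrow> 'a ^'n^'n \<Rightarrow> nat" where
  "min_poly_degree_mod \<pi> A =
     (LEAST d. \<exists>G. lead_coeff G = 1 \<and> degree G = d \<and> mat_zero_mod \<pi> (poly_mat G A))"

text \<open>The null ideal of A_q = A mod q in (R/qR)[t], represented by the set of all lifts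
  to R[t] of its elements.\<close>
definition null_ideal_mod :: "'a::comm_ring_1 \<Rightarrow> 'a ^'n^'n \<Rightarrow> 'a poly set" where
  "null_ideal_mod q A = {G. mat_zero_mod q (poly_mat G A)}"

text \<open>The principal ideal of (R/qR)[t] generated by F mod q, represented by all lifts.\<close>
definition principal_poly_ideal_mod :: "'a::comm_ring_1 \<Rightarrow> 'a poly \<Rightarrow> 'a poly set" where
  "principal_poly_ideal_mod q F = {G. \<exists>H. poly_cong_mod q G (H * F)}"

end

theory Submission
  imports Defs
begin

text \<open>Divide a polynomial G with G(A) \<equiv> 0 mod \<pi>^m by the monic F: G = F Q + R with
  deg R < deg F \<le> d, the degree of the minimal polynomial of A mod \<pi>, and R(A) \<equiv> 0 mod \<pi>^m.
  By induction on m, \<pi>^m divides every coefficient of R. Writing R = \<pi>^m R', completeness makes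
  every element outside (\<pi>) a unit (1 - b\<pi> is inverted by a geometric series), so \<pi>^m can be
  cancelled from \<pi>^(m+1) | \<pi>^m R'(A) unless \<pi>^m = 0, giving R'(A) \<equiv> 0 mod \<pi>. If R' were nonzero
  mod \<pi>, its highest coefficient outside (\<pi>) would be a unit, and normalising it would produce a
  monic polynomial of degree < d annihilating A mod \<pi>.\<close>

lemma mat_mult_nth [simp]:
  fixes M :: "'a::semiring_1 ^'m^'n"
  shows "(mat c ** M) $ i $ j = c * M $ i $ j"
  by (simp add: matrix_matrix_mult_def mat_def if_distrib if_distribR cong: if_cong)

lemma matrix_add_rdistrib: "((B::'a::semiring_1^'n^'m) + C) ** M = B ** M + C ** M"
  by (simp add: matrix_matrix_mult_def vec_eq_iff sum.distrib algebra_simps)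

lemma mat_pow_Suc: "mat_pow A (Suc k) = A ** mat_pow A k"
  by (simp add: mat_pow_def)

lemma poly_mat_nth_sum:
  assumes "degree p \<le> N"
  shows "poly_mat p A $ i $ j = (\<Sum>k\<le>N. coeff p k * mat_pow A k $ i $ j)"
  unfolding poly_mat_def
  by (simp, rule sum.mono_neutral_left) (use assms in \<open>auto simp: coeff_eq_0\<close>)

lemma poly_mat_add: "poly_mat (p + q) A = poly_mat p A + poly_mat q A"
proof -
  let ?N = "max (degree p) (degree q)"
  have "degree (p + q) \<le> ?N" by (rule degree_add_le) auto
  then show ?thesis
    by (simp add: vec_eq_iff poly_mat_nth_sum[of _ ?N] sum.distrib algebra_simps)
qed

lemma poly_mat_diff: "poly_mat (p - q) A = poly_mat p A - poly_mat q A"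
  by (metis add_diff_cancel_right' diff_add_cancel poly_mat_add)

lemma poly_mat_smult: "poly_mat (smult c p) A = mat c ** poly_mat p A"
  using degree_smult_le[of c p]
  by (simp add: vec_eq_iff poly_mat_nth_sum[of _ "degree p"] sum_distrib_left mult.assoc)

lemma poly_mat_0 [simp]: "poly_mat 0 A = 0"
  by (simp add: poly_mat_def vec_eq_iff)

lemma poly_mat_pCons: "poly_mat (pCons a p) A = mat a + A ** poly_mat p A"
proof -
  have "poly_mat (pCons a p) A $ i $ j = mat a $ i $ j + (A ** poly_mat p A) $ i $ j" for i j
  proof -
    have "poly_mat (pCons a p) A $ i $ j
        = a * mat 1 $ i $ j + (\<Sum>k\<le>degree p. coeff p k * (A ** mat_pow A k) $ i $ j)"
      using degree_pCons_le[of a p]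
      by (simp add: poly_mat_nth_sum[of _ "Suc (degree p)"] sum.atMost_Suc_shift mat_pow_Suc
          del: sum.atMost_Suc) (simp add: mat_pow_def)
    also have "\<dots> = mat a $ i $ j + (A ** poly_mat p A) $ i $ j"
      by (simp add: mat_def poly_mat_def matrix_matrix_mult_def sum_distrib_left
          sum.swap[where A = UNIV] mult_ac)
    finally show ?thesis .
  qed
  then show ?thesis by (simp add: vec_eq_iff)
qed

lemma poly_mat_mult: "poly_mat (p * q) A = poly_mat p A ** poly_mat q A"
proof (induction p)
  case 0
  then show ?case by simp
next
  case (pCons a p)
  have "poly_mat (pCons a p * q) A = mat a ** poly_mat q A + A ** (poly_mat p A ** poly_mat q A)"
    by (simp add: poly_mat_add poly_mat_smult poly_mat_pCons[of 0] pCons.IH)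
  also have "\<dots> = poly_mat (pCons a p) A ** poly_mat q A"
    by (simp add: poly_mat_pCons matrix_add_rdistrib matrix_mul_assoc)
  finally show ?case .
qed

lemma mat_zero_mod_poly_mat:
  "(\<And>k. q dvd coeff p k) \<Longrightarrow> mat_zero_mod q (poly_mat p A)"
  by (simp add: mat_zero_mod_def poly_mat_def dvd_sum)

lemma mat_zero_mod_poly_mat_cong:
  assumes "poly_cong_mod q G H" and "mat_zero_mod q (poly_mat H A)"
  shows "mat_zero_mod q (poly_mat G A)"
proof -
  have "mat_zero_mod q (poly_mat (G - H) A)"
    using assms(1) by (intro mat_zero_mod_poly_mat) (simp add: poly_cong_mod_def)
  with assms(2) show ?thesis
    by (simp add: mat_zero_mod_def poly_mat_diff) (metis diff_add_cancel dvd_add)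
qed

lemma principal_poly_ideal_mod_subset_null_ideal_mod:
  assumes "poly_mat F A = 0"
  shows "principal_poly_ideal_mod q F \<subseteq> null_ideal_mod q A"
proof
  fix G assume "G \<in> principal_poly_ideal_mod q F"
  then obtain H where "poly_cong_mod q G (H * F)"
    by (auto simp: principal_poly_ideal_mod_def)
  moreover have "mat_zero_mod q (poly_mat (H * F) A)"
    using assms by (simp add: poly_mat_mult mat_zero_mod_def)
  ultimately show "G \<in> null_ideal_mod q A"
    unfolding null_ideal_mod_def by (blast intro: mat_zero_mod_poly_mat_cong)
qed

lemma monic_division:
  fixes F G :: "'a::comm_ring_1 poly"
  assumes "lead_coeff F = 1"
  obtains Q R where "G = F * Q + R" and "R = 0 \<or> degree R < degree F"
proof -
  obtain Q R where QR: "pseudo_divmod G F = (Q, R)" by fastforce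
  have "F \<noteq> 0" using assms by auto
  from pseudo_divmod[OF this QR] assms show thesis by (intro that) simp_all
qed

lemma degree_mod_eq_degree:
  assumes "lead_coeff F = 1" and "\<not> \<pi> dvd 1"
  shows "degree_mod \<pi> F = degree F"
proof -
  have "\<not> \<pi> dvd coeff F (degree F)" using assms by simp
  moreover have "(GREATEST k. \<not> \<pi> dvd coeff F k) = degree F"
    by (rule Greatest_equality) (use assms in \<open>auto intro: le_degree\<close>)
  ultimately show ?thesis by (auto simp: degree_mod_def)
qed

lemma degree_mod_nondvd:
  assumes "\<not> (\<forall>k. \<pi> dvd coeff p k)"
  shows "\<not> \<pi> dvd coeff p (degree_mod \<pi> p)" and "\<And>k. degree_mod \<pi> p < k \<Longrightarrow> \<pi> dvd coeff p k"
proof -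
  have bound: "\<forall>k. \<not> \<pi> dvd coeff p k \<longrightarrow> k \<le> degree p"
    by (auto intro: le_degree)
  have eq: "degree_mod \<pi> p = (GREATEST k. \<not> \<pi> dvd coeff p k)"
    unfolding degree_mod_def by (rule if_not_P[OF assms])
  show "\<not> \<pi> dvd coeff p (degree_mod \<pi> p)"
    unfolding eq by (rule GreatestI_ex_nat[where b = "degree p"]) (use assms bound in blast)+
  show "\<pi> dvd coeff p k" if "degree_mod \<pi> p < k" for k
  proof (rule ccontr)
    assume "\<not> \<pi> dvd coeff p k"
    then have "k \<le> degree_mod \<pi> p"
      unfolding eq by (rule Greatest_le_nat) (use bound in blast)
    with that show False by simp
  qed
qed

lemma min_poly_degree_mod_le:
  assumes "lead_coeff G = 1" and "mat_zero_mod \<pi> (poly_mat G A)"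
  shows "min_poly_degree_mod \<pi> A \<le> degree G"
  unfolding min_poly_degree_mod_def by (rule Least_le) (use assms in blast)

lemma is_ideal_linear_combinations: "is_ideal {a * x + b * y | a b. True}"
  unfolding is_ideal_def
proof (intro conjI ballI allI)
  show "0 \<in> {a * x + b * y | a b. True}"
    by (rule CollectI, rule exI[of _ 0], rule exI[of _ 0]) simp
next
  fix u v assume "u \<in> {a * x + b * y | a b. True}" "v \<in> {a * x + b * y | a b. True}"
  then obtain a b c d where "u = a * x + b * y" "v = c * x + d * y" by blast
  then have "u + v = (a + c) * x + (b + d) * y" by (simp add: algebra_simps)
  then show "u + v \<in> {a * x + b * y | a b. True}" by blast
next
  fix r u assume "u \<in> {a * x + b * y | a b. True}"
  then obtain a b where "u = a * x + b * y" by blast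
  then have "r * u = (r * a) * x + (r * b) * y" by (simp add: algebra_simps)
  then show "r * u \<in> {a * x + b * y | a b. True}" by blast
qed

lemma smult_factor_if_dvd_coeffs:
  fixes p :: "'a::comm_ring_1 poly"
  assumes "\<And>k. q dvd coeff p k"
  obtains p' where "p = smult q p'" and "\<And>k. coeff p k = 0 \<Longrightarrow> coeff p' k = 0"
proof -
  have "\<forall>k. \<exists>c. coeff p k = q * c \<and> (coeff p k = 0 \<longrightarrow> c = 0)"
    using assms by (metis dvdE mult_zero_right)
  then obtain c where c: "\<And>k. coeff p k = q * c k" "\<And>k. coeff p k = 0 \<Longrightarrow> c k = 0"
    by metis
  have "coeff (Abs_poly c) = c"
    by (rule coeff_Abs_poly[where n = "degree p"]) (simp add: c(2) coeff_eq_0)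
  with c show thesis
    by (intro that[of "Abs_poly c"]) (simp_all add: poly_eq_iff)
qed

locale complete_local =
  fixes \<pi> :: "'a::comm_ring_1"
  assumes complete: "complete_wrt_principal \<pi>"
    and maximal: "is_maximal_ideal (principal_ideal \<pi>)"
begin

lemma pi_not_unit: "\<not> \<pi> dvd 1"
proof
  assume "\<pi> dvd 1"
  then have "principal_ideal \<pi> = UNIV"
    by (auto simp: principal_ideal_def intro: dvd_trans)
  with maximal show False by (simp add: is_maximal_ideal_def)
qed

lemma one_minus_mult_pi_unit: "1 - b * \<pi> dvd 1"
proof -
  define s where "s j = (\<Sum>i<j. (b * \<pi>) ^ i)" for j
  have "\<pi> ^ j dvd s (Suc j) - s j" for j
    by (simp add: s_def power_mult_distrib)
  then obtain x where x: "\<pi> ^ j dvd x - s j" for j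
    using complete unfolding complete_wrt_principal_def by blast
  have "\<pi> ^ j dvd (1 - b * \<pi>) * x - 1" for j
  proof -
    have "(1 - b * \<pi>) * x - 1 = (1 - b * \<pi>) * (x - s j) - (b * \<pi>) ^ j"
      using one_diff_power_eq[of "b * \<pi>" j] by (simp add: s_def algebra_simps)
    then show ?thesis
      by (simp add: x power_mult_distrib)
  qed
  then have "(1 - b * \<pi>) * x = 1"
    using complete unfolding complete_wrt_principal_def by (metis eq_iff_diff_eq_0)
  then show ?thesis by (metis dvdI)
qed

lemma unit_if_not_dvd_pi:
  assumes "\<not> \<pi> dvd x"
  shows "x dvd 1"
proof -
  define J where "J = {a * x + b * \<pi> | a b. True}"
  have "is_ideal J"
    unfolding J_def by (rule is_ideal_linear_combinations)
  moreover have "principal_ideal \<pi> \<subseteq> J"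
    unfolding principal_ideal_def J_def by (auto elim!: dvdE) (metis add_0 mult.commute mult_zero_left)
  moreover have "x \<in> J"
    unfolding J_def by (rule CollectI, rule exI[of _ 1], rule exI[of _ 0]) simp
  moreover have "x \<notin> principal_ideal \<pi>"
    using assms by (simp add: principal_ideal_def)
  ultimately have "J = UNIV"
    using maximal unfolding is_maximal_ideal_def by blast
  then have "1 \<in> J" by simp
  then obtain a b where "1 = a * x + b * \<pi>"
    unfolding J_def by blast
  then have "x * a = 1 - b * \<pi>"
    by (simp add: algebra_simps)
  then show ?thesis
    using one_minus_mult_pi_unit[of b] by (metis dvd_triv_left dvd_trans)
qed

lemma dvd_pi_if_power_dvd:
  assumes "\<pi> ^ Suc k dvd \<pi> ^ k * x" and "\<pi> ^ k \<noteq> 0"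
  shows "\<pi> dvd x"
proof (rule ccontr)
  assume "\<not> \<pi> dvd x"
  then obtain y where "1 = x * y"
    using unit_if_not_dvd_pi by (blast elim: dvdE)
  then have "\<pi> ^ Suc k dvd \<pi> ^ k"
    using assms(1) by (metis dvd_mult2 mult.assoc mult_1_right)
  then obtain c where "\<pi> ^ k = \<pi> ^ Suc k * c"
    by (blast elim: dvdE)
  then have "\<pi> ^ k * (1 - c * \<pi>) = 0"
    by (simp add: algebra_simps)
  moreover obtain w where "1 = (1 - c * \<pi>) * w"
    using one_minus_mult_pi_unit by (blast elim: dvdE)
  ultimately have "\<pi> ^ k = 0"
    by (metis mult.assoc mult_1_right mult_zero_left)
  with assms(2) show False ..
qed

lemma monic_cong_smult_mod_pi:
  assumes "\<not> (\<forall>k. \<pi> dvd coeff p k)"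
  obtains v G where "lead_coeff G = 1" and "degree G = degree_mod \<pi> p"
    and "poly_cong_mod \<pi> G (smult v p)"
proof -
  define e where "e = degree_mod \<pi> p"
  have e: "\<not> \<pi> dvd coeff p e" "\<And>k. e < k \<Longrightarrow> \<pi> dvd coeff p k"
    using degree_mod_nondvd[OF assms] by (simp_all add: e_def)
  obtain v where v: "v * coeff p e = 1"
    using unit_if_not_dvd_pi[OF e(1)] by (metis dvdE mult.commute)
  define G where "G = smult v (poly_cutoff (Suc e) p)"
  have coeff_G: "coeff G k = (if k \<le> e then v * coeff p k else 0)" for k
    by (simp add: G_def coeff_poly_cutoff)
  have "degree G = e"
  proof (rule antisym)
    show "degree G \<le> e" by (rule degree_le) (simp add: coeff_G)
    show "e \<le> degree G" by (rule le_degree) (simp add: coeff_G v)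
  qed
  moreover have "lead_coeff G = 1"
    using calculation by (simp add: coeff_G v)
  moreover have "poly_cong_mod \<pi> G (smult v p)"
    unfolding poly_cong_mod_def by (simp add: coeff_G e(2))
  ultimately show thesis
    using that e_def by blast
qed

lemma coeffs_dvd_pi_if_annihilates:
  assumes low: "\<forall>k \<ge> min_poly_degree_mod \<pi> A. coeff p k = 0"
    and annihilates: "mat_zero_mod \<pi> (poly_mat p A)"
  shows "\<pi> dvd coeff p k"
proof -
  have "\<forall>k. \<pi> dvd coeff p k"
  proof (rule ccontr)
    assume nondvd: "\<not> (\<forall>k. \<pi> dvd coeff p k)"
    then obtain v G where G: "lead_coeff G = 1" "degree G = degree_mod \<pi> p"
      and cong: "poly_cong_mod \<pi> G (smult v p)"
      by (rule monic_cong_smult_mod_pi)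
    have "mat_zero_mod \<pi> (poly_mat (smult v p) A)"
      using annihilates by (simp add: poly_mat_smult mat_zero_mod_def)
    with cong have "mat_zero_mod \<pi> (poly_mat G A)"
      by (rule mat_zero_mod_poly_mat_cong)
    with G have "min_poly_degree_mod \<pi> A \<le> degree_mod \<pi> p"
      by (metis min_poly_degree_mod_le)
    moreover have "coeff p (degree_mod \<pi> p) \<noteq> 0"
      using degree_mod_nondvd(1)[OF nondvd] by auto
    ultimately show False
      using low by blast
  qed
  then show ?thesis ..
qed

lemma coeffs_dvd_pi_power_if_annihilates:
  assumes low: "\<forall>k \<ge> min_poly_degree_mod \<pi> A. coeff p k = 0"
  shows "mat_zero_mod (\<pi> ^ m) (poly_mat p A) \<Longrightarrow> \<pi> ^ m dvd coeff p k"
proof (induction m arbitrary: k)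
  case 0
  then show ?case by simp
next
  case (Suc m)
  have IH: "\<pi> ^ m dvd coeff p j" for j
    using Suc.prems by (intro Suc.IH) (metis mat_zero_mod_def dvd_mult_right power_Suc)
  show ?case
  proof (cases "\<pi> ^ m = 0")
    case True
    then show ?thesis using IH[of k] by simp
  next
    case False
    obtain p' where p': "p = smult (\<pi> ^ m) p'" and vanish: "\<And>j. coeff p j = 0 \<Longrightarrow> coeff p' j = 0"
      using smult_factor_if_dvd_coeffs[of "\<pi> ^ m" p] IH by blast
    have "mat_zero_mod \<pi> (poly_mat p' A)"
      unfolding mat_zero_mod_def
    proof (intro allI)
      fix i j
      have "\<pi> ^ Suc m dvd \<pi> ^ m * poly_mat p' A $ i $ j"
        using Suc.prems by (simp add: p' poly_mat_smult mat_zero_mod_def)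
      then show "\<pi> dvd poly_mat p' A $ i $ j"
        using False by (rule dvd_pi_if_power_dvd)
    qed
    then have "\<pi> dvd coeff p' k"
      using low vanish by (intro coeffs_dvd_pi_if_annihilates) auto
    then have "\<pi> ^ m * \<pi> dvd \<pi> ^ m * coeff p' k"
      by (rule mult_dvd_mono[OF dvd_refl])
    then show ?thesis
      by (simp add: p' mult.commute)
  qed
qed

lemma null_ideal_mod_eq_principal:
  assumes monic: "lead_coeff F = 1" and annih: "poly_mat F A = 0"
    and deg: "degree F \<le> min_poly_degree_mod \<pi> A"
  shows "null_ideal_mod (\<pi> ^ m) A = principal_poly_ideal_mod (\<pi> ^ m) F"
proof
  show "null_ideal_mod (\<pi> ^ m) A \<subseteq> principal_poly_ideal_mod (\<pi> ^ m) F"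
  proof
    fix G assume "G \<in> null_ideal_mod (\<pi> ^ m) A"
    then have G: "mat_zero_mod (\<pi> ^ m) (poly_mat G A)"
      by (simp add: null_ideal_mod_def)
    obtain Q R where QR: "G = F * Q + R" and R: "R = 0 \<or> degree R < degree F"
      using monic_division[OF monic] .
    have "poly_mat R A = poly_mat G A"
      using annih by (simp add: QR poly_mat_add poly_mat_mult)
    moreover have "\<forall>k \<ge> min_poly_degree_mod \<pi> A. coeff R k = 0"
      using R deg by (auto intro: coeff_eq_0)
    ultimately have "\<pi> ^ m dvd coeff R k" for k
      using G coeffs_dvd_pi_power_if_annihilates by metis
    then have "poly_cong_mod (\<pi> ^ m) G (Q * F)"
      by (simp add: poly_cong_mod_def QR mult.commute)
    then show "G \<in> principal_poly_ideal_mod (\<pi> ^ m) F"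
      by (auto simp: principal_poly_ideal_mod_def)
  qed
  show "principal_poly_ideal_mod (\<pi> ^ m) F \<subseteq> null_ideal_mod (\<pi> ^ m) A"
    using annih by (rule principal_poly_ideal_mod_subset_null_ideal_mod)
qed

end

theorem proposition2p2:
  fixes \<pi> :: "'a::comm_ring_1"
    and A :: "'a ^'n^'n"
    and F :: "'a poly"
  assumes local: "is_local_ring TYPE('a)"
    and pir: "is_principal_ideal_ring TYPE('a)"
    and maxl: "is_maximal_ideal (principal_ideal \<pi>)"
    and complete: "complete_wrt_principal \<pi>"
    and char_not_2: "\<not> \<pi> dvd 2"
    and GL: "invertible A"
    and monic: "lead_coeff F = 1"
    and annih: "poly_mat F A = 0"
    and deg: "degree_mod \<pi> F = min_poly_degree_mod \<pi> A"
  shows "\<forall>i::nat. null_ideal_mod (\<pi> ^ (i + 1)) A = principal_poly_ideal_mod (\<pi> ^ (i + 1)) F"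
proof
  interpret complete_local \<pi>
    using complete maxl by unfold_locales
  have "degree F \<le> min_poly_degree_mod \<pi> A"
    using deg degree_mod_eq_degree[OF monic pi_not_unit] by simp
  then show "null_ideal_mod (\<pi> ^ (i + 1)) A = principal_poly_ideal_mod (\<pi> ^ (i + 1)) F" for i
    by (rule null_ideal_mod_eq_principal[OF monic annih])
qed

end
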